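(* Let $\varepsilon>0$, let $w_1,\dots,w_{N-1}\in\mathbb D$, and let $m$ be a positive integer. Set $U_\varepsilon=\bigcup_{x\in[0,1]}D(x,\varepsilon)$. Then there exist a holomorphic function $h$ on $\mathbb D$ and a point $\zeta^*\in\mathbb D$ such that $h(\mathbb D)\subset U_\varepsilon$, $h(0)=0$, $h^{(k)}(w_j)=0$ for $0\le k\le m-1$ and $1\le j\le N-1$, $h(\zeta^* )=1$, and $h^{(k)}(\zeta^* )=0$ for $1\le k\le m-1$.
   Context: $\mathbb D$ is the open unit disc in $\mathbb C$ and $D(x,\varepsilon)$ the open disc of centre $x$ and radius $\varepsilon$. *)

theory Defs
  imports "HOL-Complex_Analysis.Complex_Analysis"
begin

definition U_eps :: "real \<Rightarrow> complex set" where
  "U_eps \<epsilon> = (\<Union>x\<in>{0..1::real}. ball (complex_of_real x) \<epsilon>)"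

end

theory Submission
  imports Defs "HOL-Real_Asymp.Real_Asymp"
begin

(* A finite Blaschke product B vanishes at 0 and at the w_j, and |B| comes arbitrarily
   close to 1 inside the disc.  Rotate B so that B(zeta) = t > 0 and compose it with
   u |-> (log(1+u) - log(1-u)) / log((1+t)/(1-t)): the result v sends zeta to 1, every zero
   of B to 0, and the disc into the strip |Im v| < pi / log((1+t)/(1-t)), which is as thin as
   we like for t close to 1.  The entire function F(v) = 1 - (1 - s^m)^m with
   s = sin(pi v / 2)^2 = (1 - cos(pi v)) / 2 is 2-periodic and maps the real axis into [0,1],
   so by uniform continuity it maps a thin enough strip into U_eps; moreover F vanishes to
   order m at 0 and F - 1 vanishes to order m at 1.  Hence h = F o v. *)

lemma higher_deriv_power_mult_root:
  fixes f g :: "complex \<Rightarrow> complex"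
  assumes f: "f holomorphic_on S" and g: "g holomorphic_on S" and S: "open S" "p \<in> S"
    and "f p = 0" and "k < m"
  shows "(deriv ^^ k) (\<lambda>z. f z ^ m * g z) p = 0"
proof -
  define q where "q = (\<lambda>z. if z = p then deriv f p else (f z - f p) / (z - p))"
  have q: "q holomorphic_on S"
    unfolding q_def using f S(1) by (rule pole_lemma_open)
  have fq: "f z = (z - p) * q z" for z
    using \<open>f p = 0\<close> by (simp add: q_def)
  have "(deriv ^^ k) (\<lambda>z. f z ^ m * g z) p = (deriv ^^ k) (\<lambda>z. (z - p) ^ m * (q z ^ m * g z)) p"
    by (simp only: fq power_mult_distrib mult.assoc)
  also have "\<dots> = (\<Sum>i = 0..k. of_nat (k choose i) * (deriv ^^ i) (\<lambda>z. (z - p) ^ m) p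
                                 * (deriv ^^ (k - i)) (\<lambda>z. q z ^ m * g z) p)"
    using q g S by (intro higher_deriv_mult) (auto intro!: holomorphic_intros)
  also have "\<dots> = 0"
    using \<open>k < m\<close> by (intro sum.neutral) (auto simp: higher_deriv_power)
  finally show ?thesis .
qed

lemma higher_deriv_flat_at_zero:
  fixes s :: "complex \<Rightarrow> complex"
  assumes "s holomorphic_on S" "open S" "p \<in> S" "s p = 0" "k < m"
  shows "(deriv ^^ k) (\<lambda>z. 1 - (1 - s z ^ m) ^ m) p = 0"
proof -
  have "(\<lambda>z. 1 - (1 - s z ^ m) ^ m) = (\<lambda>z. s z ^ m * (\<Sum>i<m. (1 - s z ^ m) ^ i))"
    using one_diff_power_eq[of "1 - s _ ^ m" m] by simp
  then show ?thesis
    using assms by (simp add: higher_deriv_power_mult_root holomorphic_intros)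
qed

lemma higher_deriv_flat_at_one:
  fixes s :: "complex \<Rightarrow> complex"
  assumes s: "s holomorphic_on S" and S: "open S" "p \<in> S" and "s p = 1" "0 < k" "k < m"
  shows "(deriv ^^ k) (\<lambda>z. 1 - (1 - s z ^ m) ^ m) p = 0"
proof -
  define r where "r z = (1 - s z) * (\<Sum>i<m. s z ^ i)" for z
  have r: "r holomorphic_on S"
    unfolding r_def using s by (intro holomorphic_intros)
  \<comment> \<open>The factor 1 puts the power into the shape f z ^ m * g z used below.\<close>
  have "(\<lambda>z. 1 - (1 - s z ^ m) ^ m) = (\<lambda>z. 1 - r z ^ m * 1)"
    using one_diff_power_eq[of "s _" m] by (simp add: r_def)
  then have "(deriv ^^ k) (\<lambda>z. 1 - (1 - s z ^ m) ^ m) p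
             = (deriv ^^ k) (\<lambda>z. 1) p - (deriv ^^ k) (\<lambda>z. r z ^ m * 1) p"
    using r S by (simp only:) (intro higher_deriv_diff, auto intro!: holomorphic_intros)
  also have "(deriv ^^ k) (\<lambda>z. r z ^ m * 1) p = 0"
    using S assms(4-) by (intro higher_deriv_power_mult_root[OF r]) (auto simp: r_def)
  also have "(deriv ^^ k) (\<lambda>z. 1) p = 0"
    using \<open>0 < k\<close> by simp
  finally show ?thesis by simp
qed

lemma periodic_int_multiple:
  fixes G :: "'a::real_normed_vector \<Rightarrow> 'b"
  assumes "\<And>v. G (v + T) = G v"
  shows "G (v + of_int k *\<^sub>R T) = G v"
proof -
  have nat: "G (v + of_nat n *\<^sub>R T) = G v" for v n
  proof (induction n)
    case (Suc n)
    have "v + of_nat (Suc n) *\<^sub>R T = (v + of_nat n *\<^sub>R T) + T"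
      by (simp add: algebra_simps)
    then show ?case
      using Suc assms by metis
  qed simp
  show ?thesis
  proof (cases "k \<ge> 0")
    case True
    then show ?thesis using nat[of v "nat k"] by simp
  next
    case False
    then show ?thesis using nat[of "v + of_int k *\<^sub>R T" "nat (- k)"] by simp
  qed
qed

lemma periodic_continuous_near_real_axis:
  fixes G :: "complex \<Rightarrow> 'a::metric_space"
  assumes G: "continuous_on UNIV G" and "T > 0" and per: "\<And>v. G (v + of_real T) = G v"
    and "\<epsilon> > 0"
  obtains \<delta> where "\<delta> > 0" "\<And>v. \<bar>Im v\<bar> < \<delta> \<Longrightarrow> dist (G v) (G (of_real (Re v))) < \<epsilon>"
proof -
  define K where "K = cbox (Complex 0 (-1)) (Complex T 1)"
  have "uniformly_continuous_on K G"
    using G by (intro compact_uniformly_continuous) (auto simp: K_def intro: continuous_on_subset)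
  then obtain d where "d > 0" and d: "\<And>x y. x \<in> K \<Longrightarrow> y \<in> K \<Longrightarrow> dist y x < d \<Longrightarrow> dist (G y) (G x) < \<epsilon>"
    using \<open>\<epsilon> > 0\<close> unfolding uniformly_continuous_on_def by metis
  have per_int: "G (v - of_int k * of_real T) = G v" for v k
    using periodic_int_multiple[of G "of_real T" v "- k"] per by (simp add: scaleR_conv_of_real)
  show thesis
  proof (rule that[of "min d 1"])
    show "min d 1 > 0"
      using \<open>d > 0\<close> by simp
    fix v :: complex assume v: "\<bar>Im v\<bar> < min d 1"
    define k where "k = \<lfloor>Re v / T\<rfloor>"
    define x where "x = Re v - of_int k * T"
    have x: "0 \<le> x" "x \<le> T"
      using \<open>T > 0\<close> floor_divide_lower[of T "Re v"] floor_divide_upper[of T "Re v"]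
      by (auto simp: x_def k_def algebra_simps)
    have shift: "Complex x (Im v) = v - of_int k * of_real T"
      by (simp add: x_def complex_eq_iff)
    have "Complex x (Im v) \<in> K" "of_real x \<in> K"
      using x v by (auto simp: K_def cbox_complex_eq)
    moreover have "dist (Complex x (Im v)) (of_real x) < d"
      using v by (simp add: dist_norm cmod_def complex_of_real_def)
    ultimately have "dist (G (Complex x (Im v))) (G (of_real x)) < \<epsilon>"
      using d by (simp add: dist_commute)
    moreover have "G (Complex x (Im v)) = G v"
      unfolding shift by (rule per_int)
    moreover have "G (of_real x) = G (of_real (Re v))"
      using per_int[of "of_real (Re v)" k] by (simp add: x_def)
    ultimately show "dist (G v) (G (of_real (Re v))) < \<epsilon>"
      by simp
  qed
qed

definition flat_wave :: "nat \<Rightarrow> complex \<Rightarrow> complex" where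
  "flat_wave m v = 1 - (1 - ((1 - cos (of_real pi * v)) / 2) ^ m) ^ m"

lemma holomorphic_on_flat_wave [holomorphic_intros]:
  "v holomorphic_on S \<Longrightarrow> (\<lambda>z. flat_wave m (v z)) holomorphic_on S"
  unfolding flat_wave_def by (intro holomorphic_intros) auto

lemma flat_wave_0: "m > 0 \<Longrightarrow> flat_wave m 0 = 0"
  by (simp add: flat_wave_def power_0_left)

lemma flat_wave_1: "m > 0 \<Longrightarrow> flat_wave m 1 = 1"
  by (simp add: flat_wave_def)

lemma flat_wave_periodic: "flat_wave m (v + 2) = flat_wave m v"
proof -
  have "of_real pi * (v + 2) = of_real pi * v + of_real (2 * pi)"
    by (simp add: algebra_simps)
  then have "cos (of_real pi * (v + 2)) = cos (of_real pi * v)"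
    by (simp only: cos_add flip: cos_of_real sin_of_real) simp
  then show ?thesis
    by (simp add: flat_wave_def)
qed

lemma flat_wave_of_real: "\<exists>y\<in>{0..1}. flat_wave m (of_real x) = of_real y"
proof
  define s where "s = (1 - cos (pi * x)) / 2"
  have "s \<in> {0..1}"
    using cos_ge_minus_one[of "pi * x"] cos_le_one[of "pi * x"] by (auto simp: s_def)
  then have "s ^ m \<in> {0..1}"
    by (auto intro: power_le_one)
  then have "(1 - s ^ m) ^ m \<in> {0..1}"
    by (auto intro: power_le_one)
  then show "1 - (1 - s ^ m) ^ m \<in> {0..1}"
    by auto
  show "flat_wave m (of_real x) = of_real (1 - (1 - s ^ m) ^ m)"
    by (simp add: flat_wave_def s_def flip: cos_of_real)
qed

lemma flat_wave_near_real_axis: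
  assumes "\<epsilon> > 0"
  obtains \<delta> where "\<delta> > 0" "\<And>v. \<bar>Im v\<bar> < \<delta> \<Longrightarrow> flat_wave m v \<in> U_eps \<epsilon>"
proof -
  have "continuous_on UNIV (flat_wave m)"
    unfolding flat_wave_def by (intro continuous_intros) auto
  then obtain \<delta> where "\<delta> > 0" and \<delta>: "\<And>v. \<bar>Im v\<bar> < \<delta> \<Longrightarrow> dist (flat_wave m v) (flat_wave m (of_real (Re v))) < \<epsilon>"
    using periodic_continuous_near_real_axis[of "flat_wave m" 2] flat_wave_periodic \<open>\<epsilon> > 0\<close> by auto
  show thesis
  proof (rule that[OF \<open>\<delta> > 0\<close>])
    fix v :: complex assume "\<bar>Im v\<bar> < \<delta>"
    moreover obtain y where "y \<in> {0..1}" "flat_wave m (of_real (Re v)) = of_real y"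
      using flat_wave_of_real by blast
    ultimately have "flat_wave m v \<in> ball (of_real y) \<epsilon>"
      using \<delta> by (metis mem_ball dist_commute)
    with \<open>y \<in> {0..1}\<close> show "flat_wave m v \<in> U_eps \<epsilon>"
      unfolding U_eps_def by blast
  qed
qed

lemma higher_deriv_flat_wave_at_zero:
  assumes "v holomorphic_on S" "open S" "p \<in> S" "v p = 0" "k < m"
  shows "(deriv ^^ k) (\<lambda>z. flat_wave m (v z)) p = 0"
  unfolding flat_wave_def using assms
  by (intro higher_deriv_flat_at_zero[where S=S]) (auto intro!: holomorphic_intros)

lemma higher_deriv_flat_wave_at_one:
  assumes "v holomorphic_on S" "open S" "p \<in> S" "v p = 1" "0 < k" "k < m"
  shows "(deriv ^^ k) (\<lambda>z. flat_wave m (v z)) p = 0"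
  unfolding flat_wave_def using assms
  by (intro higher_deriv_flat_at_one[where S=S]) (auto intro!: holomorphic_intros)

lemma Moebius_function_norm_eq_1:
  assumes "norm w < 1" "norm z = 1"
  shows "norm (Moebius_function t w z) = 1"
proof -
  have "z * cnj z = 1"
    using assms(2) complex_norm_square by (metis of_real_1 power_one)
  then have "1 - cnj w * z = z * cnj (z - w)"
    by (simp add: algebra_simps)
  moreover have "z \<noteq> w"
    using assms by auto
  ultimately show ?thesis
    using assms(2) by (simp add: Moebius_function_def norm_mult norm_divide del: complex_cnj_diff)
qed

lemma Blaschke_product_exists:
  assumes "finite A" "A \<subseteq> ball 0 1"
  obtains B where "B holomorphic_on ball 0 1" "B ` ball 0 1 \<subseteq> ball 0 1" "B 0 = 0"
    "\<And>a. a \<in> A \<Longrightarrow> B a = 0" "\<And>\<rho>. \<rho> < 1 \<Longrightarrow> \<exists>\<zeta>\<in>ball 0 1. \<rho> < norm (B \<zeta>)"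
proof
  define B where "B = (\<lambda>z. z * (\<Prod>a\<in>A. Moebius_function 0 a z))"
  have A: "norm a < 1" if "a \<in> A" for a
    using assms(2) that by auto
  show "B holomorphic_on ball 0 1"
    unfolding B_def
    by (intro holomorphic_on_mult holomorphic_on_ident holomorphic_on_prod Moebius_function_holomorphic A)
  show "B ` ball 0 1 \<subseteq> ball 0 1"
  proof clarsimp
    fix z :: complex assume "norm z < 1"
    then have "(\<Prod>a\<in>A. norm (Moebius_function 0 a z)) \<le> 1"
      using A by (intro prod_le_1) (auto intro: less_imp_le Moebius_function_norm_lt_1)
    then have "norm z * (\<Prod>a\<in>A. norm (Moebius_function 0 a z)) \<le> norm z"
      by (simp add: mult_left_le)
    with \<open>norm z < 1\<close> show "norm (B z) < 1"
      by (simp add: B_def norm_mult prod_norm)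
  qed
  show "B 0 = 0"
    by (simp add: B_def)
  show "B a = 0" if "a \<in> A" for a
    using assms(1) that by (force simp: B_def Moebius_function_eq_zero)
  fix \<rho> :: real assume "\<rho> < 1"
  have "isCont B 1"
    using A unfolding B_def Moebius_function_def
    by (intro continuous_intros) (force simp: right_minus_eq)
  moreover have "norm (B 1) = 1"
    using A by (simp add: B_def norm_mult prod_norm[symmetric] Moebius_function_norm_eq_1)
  moreover have "((\<lambda>r. complex_of_real r) \<longlongrightarrow> 1) (at_left 1)"
    using tendsto_of_real[OF tendsto_ident_at[of "1::real" "{..<1}"]] by simp
  ultimately have "((\<lambda>r. norm (B (of_real r))) \<longlongrightarrow> 1) (at_left 1)"
    by (metis tendsto_norm isCont_tendsto_compose)
  then have "\<forall>\<^sub>F r in at_left 1. \<rho> < norm (B (of_real r))"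
    using \<open>\<rho> < 1\<close> by (rule order_tendstoD)
  moreover have "\<forall>\<^sub>F r in at_left 1. r \<in> {0<..<1::real}"
    by (rule eventually_at_left_real) simp
  ultimately obtain r :: real where "\<rho> < norm (B (of_real r))" "r \<in> {0<..<1}"
    using eventually_happens'[OF trivial_limit_at_left_real] eventually_conj by blast
  then show "\<exists>\<zeta>\<in>ball 0 1. \<rho> < norm (B \<zeta>)"
    by (intro bexI[of _ "of_real r"]) auto
qed

lemma disc_to_strip_through_point:
  fixes B :: "complex \<Rightarrow> complex"
  assumes B: "B holomorphic_on ball 0 1" "B ` ball 0 1 \<subseteq> ball 0 1"
    and \<zeta>: "\<zeta> \<in> ball 0 1" "B \<zeta> \<noteq> 0"
  defines "t \<equiv> norm (B \<zeta>)"
  obtains v where "v holomorphic_on ball 0 1" "v \<zeta> = 1"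
    "\<And>z. z \<in> ball 0 1 \<Longrightarrow> B z = 0 \<Longrightarrow> v z = 0"
    "\<And>z. z \<in> ball 0 1 \<Longrightarrow> \<bar>Im (v z)\<bar> < pi / (ln (1 + t) - ln (1 - t))"
proof -
  have norm_B: "norm (B z) < 1" if "z \<in> ball 0 1" for z
    using B(2) that by (auto simp: image_subset_iff)
  have t: "0 < t" "t < 1"
    using norm_B \<zeta> by (auto simp: t_def)
  define L where "L = ln (1 + t) - ln (1 - t)"
  have "L > 0"
    using t by (simp add: L_def)
  define u where "u z = B z * (cnj (B \<zeta>) / of_real t)" for z
  have norm_u: "norm (u z) = norm (B z)" for z
    using t by (simp add: u_def norm_mult norm_divide t_def)
  have u_\<zeta>: "u \<zeta> = of_real t"
    using t complex_norm_square[of "B \<zeta>"] by (simp add: u_def t_def power2_eq_square field_simps)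
  have Re_pos: "0 < Re (1 + u z)" "0 < Re (1 - u z)" if "z \<in> ball 0 1" for z
    using norm_B[OF that] abs_Re_le_cmod[of "u z"] norm_u[of z] by auto
  define v where "v z = (Ln (1 + u z) - Ln (1 - u z)) / of_real L" for z
  show thesis
  proof
    have "u holomorphic_on ball 0 1"
      unfolding u_def by (intro holomorphic_intros B(1))
    then show "v holomorphic_on ball 0 1"
      unfolding v_def using Re_pos \<open>L > 0\<close>
      by (intro holomorphic_intros) (fastforce simp: complex_nonpos_Reals_iff)+
    have "Ln (of_real (1 + t)) - Ln (of_real (1 - t)) = of_real L"
      using t by (subst (1 2) Ln_of_real) (auto simp: L_def)
    then show "v \<zeta> = 1"
      using \<open>L > 0\<close> by (simp add: v_def u_\<zeta>)
    show "v z = 0" if "B z = 0" for z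
      using that by (simp add: v_def u_def)
    fix z :: complex assume z: "z \<in> ball 0 1"
    have "\<bar>Im (Ln (1 + u z)) - Im (Ln (1 - u z))\<bar> < pi"
      using Re_Ln_pos_lt_imp[OF Re_pos(1)[OF z]] Re_Ln_pos_lt_imp[OF Re_pos(2)[OF z]] by linarith
    then show "\<bar>Im (v z)\<bar> < pi / (ln (1 + t) - ln (1 - t))"
      using \<open>L > 0\<close> by (simp add: v_def Im_divide_of_real abs_divide divide_strict_right_mono flip: L_def)
  qed
qed

lemma disc_to_thin_strip:
  fixes B :: "complex \<Rightarrow> complex"
  assumes B: "B holomorphic_on ball 0 1" "B ` ball 0 1 \<subseteq> ball 0 1"
    and sup: "\<And>\<rho>. \<rho> < 1 \<Longrightarrow> \<exists>\<zeta>\<in>ball 0 1. \<rho> < norm (B \<zeta>)" and "\<delta> > 0"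
  obtains v \<zeta> where "v holomorphic_on ball 0 1" "\<zeta> \<in> ball 0 1" "v \<zeta> = 1"
    "\<And>z. z \<in> ball 0 1 \<Longrightarrow> B z = 0 \<Longrightarrow> v z = 0"
    "\<And>z. z \<in> ball 0 1 \<Longrightarrow> \<bar>Im (v z)\<bar> < \<delta>"
proof -
  have "filterlim (\<lambda>t. ln (1 + t) - ln (1 - t)) at_top (at_left (1::real))"
    by real_asymp
  then have "\<forall>\<^sub>F t in at_left 1. pi / \<delta> < ln (1 + t) - ln (1 - t)"
    by (simp add: filterlim_at_top_dense)
  then obtain \<rho> :: real where "\<rho> < 1" and \<rho>: "\<And>t. \<rho> < t \<Longrightarrow> t < 1 \<Longrightarrow> pi / \<delta> < ln (1 + t) - ln (1 - t)"
    by (auto simp: eventually_at_left_field)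
  obtain \<zeta> where \<zeta>: "\<zeta> \<in> ball 0 1" "max 0 \<rho> < norm (B \<zeta>)"
    using sup[of "max 0 \<rho>"] \<open>\<rho> < 1\<close> by auto
  define t where "t = norm (B \<zeta>)"
  have t: "0 < t" "\<rho> < t" "t < 1"
    using \<zeta> B(2) by (auto simp: t_def image_subset_iff)
  then have "B \<zeta> \<noteq> 0"
    by (auto simp: t_def)
  obtain v where v: "v holomorphic_on ball 0 1" "v \<zeta> = 1"
    "\<And>z. z \<in> ball 0 1 \<Longrightarrow> B z = 0 \<Longrightarrow> v z = 0"
    "\<And>z. z \<in> ball 0 1 \<Longrightarrow> \<bar>Im (v z)\<bar> < pi / (ln (1 + t) - ln (1 - t))"
    using disc_to_strip_through_point[OF B \<zeta>(1) \<open>B \<zeta> \<noteq> 0\<close>] unfolding t_def by blast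
  have "pi / \<delta> < ln (1 + t) - ln (1 - t)" "0 < ln (1 + t) - ln (1 - t)"
    using \<rho> t by simp_all
  then have "pi / (ln (1 + t) - ln (1 - t)) < \<delta>"
    using \<open>\<delta> > 0\<close> by (simp add: field_simps)
  with v(4) show thesis
    using that[OF v(1) \<zeta>(1) v(2,3)] by fastforce
qed

theorem mainTheorem8:
  fixes \<epsilon> :: real and N m :: nat and w :: "nat \<Rightarrow> complex"
  assumes "\<epsilon> > 0"
    and "\<And>j. j \<in> {1..N-1} \<Longrightarrow> w j \<in> ball 0 1"
    and "m \<ge> 1"
  shows "\<exists>h \<zeta>. h holomorphic_on ball 0 1 \<and> \<zeta> \<in> ball 0 1
           \<and> h ` ball 0 1 \<subseteq> U_eps \<epsilon>
           \<and> h 0 = 0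
           \<and> (\<forall>j\<in>{1..N-1}. \<forall>k<m. (deriv ^^ k) h (w j) = 0)
           \<and> h \<zeta> = 1
           \<and> (\<forall>k\<in>{1..m-1}. (deriv ^^ k) h \<zeta> = 0)"
proof -
  obtain \<delta> where "\<delta> > 0" and \<delta>: "\<And>v. \<bar>Im v\<bar> < \<delta> \<Longrightarrow> flat_wave m v \<in> U_eps \<epsilon>"
    using flat_wave_near_real_axis[OF \<open>\<epsilon> > 0\<close>] by blast
  have "w ` {1..N-1} \<subseteq> ball 0 1"
    using assms(2) by blast
  then obtain B where B: "B holomorphic_on ball 0 1" "B ` ball 0 1 \<subseteq> ball 0 1" "B 0 = 0"
    "\<And>a. a \<in> w ` {1..N-1} \<Longrightarrow> B a = 0" "\<And>\<rho>. \<rho> < 1 \<Longrightarrow> \<exists>\<zeta>\<in>ball 0 1. \<rho> < norm (B \<zeta>)"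
    using Blaschke_product_exists[OF finite_imageI[OF finite_atLeastAtMost]] by blast
  obtain v \<zeta> where v: "v holomorphic_on ball 0 1" "\<zeta> \<in> ball 0 1" "v \<zeta> = 1"
    "\<And>z. z \<in> ball 0 1 \<Longrightarrow> B z = 0 \<Longrightarrow> v z = 0" "\<And>z. z \<in> ball 0 1 \<Longrightarrow> \<bar>Im (v z)\<bar> < \<delta>"
    using disc_to_thin_strip[OF B(1,2,5) \<open>\<delta> > 0\<close>] by blast
  have "v 0 = 0" and v_w: "\<And>j. j \<in> {1..N-1} \<Longrightarrow> v (w j) = 0"
    using v(4) B(3,4) assms(2) by simp_all
  define h where "h = (\<lambda>z. flat_wave m (v z))"
  have "h holomorphic_on ball 0 1"
    unfolding h_def using v(1) by (rule holomorphic_on_flat_wave)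
  moreover have "h ` ball 0 1 \<subseteq> U_eps \<epsilon>"
    using v(5) \<delta> by (auto simp: h_def)
  moreover have "h 0 = 0" "h \<zeta> = 1"
    using \<open>v 0 = 0\<close> v(3) assms(3) by (simp_all add: h_def flat_wave_0 flat_wave_1)
  moreover have "\<forall>j\<in>{1..N-1}. \<forall>k<m. (deriv ^^ k) h (w j) = 0"
    unfolding h_def using v(1) assms(2) v_w
    by (auto intro!: higher_deriv_flat_wave_at_zero[where S="ball 0 1"])
  moreover have "\<forall>k\<in>{1..m-1}. (deriv ^^ k) h \<zeta> = 0"
    unfolding h_def using v(1-3) assms(3)
    by (auto intro!: higher_deriv_flat_wave_at_one[where S="ball 0 1"])
  ultimately show ?thesis
    using v(2) by blast
qed

end
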